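(* Let $n\ge 3$ and let $x_1<x_2<\dots<x_n$ be nodes with data values $f_1,\dots,f_n$. Set $h_i=x_{i+1}-x_i$, $m_i=(f_{i+1}-f_i)/h_i$ for $1\le i\le n-1$, and $\lambda_i=\frac{h_{i+1}}{h_i+h_{i+1}}$, $\mu_i=\frac{h_i}{h_i+h_{i+1}}$ for $1\le i\le n-2$. Let $P$ be the cubic spline defined as follows. Given boundary values $\dot f_1,\dot f_n\in\mathbb{R}$, the interior derivative values $\dot f_2,\dots,\dot f_{n-1}$ are the unique solution of the linear system $$\lambda_i\dot f_i+2\dot f_{i+1}+\mu_i\dot f_{i+2}=3(\lambda_i m_i+\mu_i m_{i+1}),\qquad i=1,\dots,n-2,$$ in which $\dot f_1$ and $\dot f_n$ are regarded as known. On each interval $[x_i,x_{i+1}]$, $1\le i\le n-1$, $P$ coincides with the cubic polynomial $$P_i(x)=f_i+\dot f_i(x-x_i)+\frac{m_i-\dot f_i}{h_i}(x-x_i)^2+\frac{\dot f_{i+1}+\dot f_i-2m_i}{h_i^2}(x-x_i)^2(x-x_{i+1}).$$ Let $\widetilde P$, with pieces $\widetilde P_i$, be the cubic spline constructed in exactly the same way from the same nodes and data values $f_i$, but with boundary values $\dot{\widetilde f}_1\neq\dot f_1$ and $\dot{\widetilde f}_n\neq\dot f_n$. Its interior derivative values $\dot{\widetilde f}_2,\dots,\dot{\widetilde f}_{n-1}$ are obtained by solving the same system with these boundary values. Then for every $i$ with $2\le i\le n-2$ and every $x\in[x_i,x_{i+1}]$, $$|P_i(x)-\widetilde P_i(x)|\le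 8h_i\left(2^{-i}\lambda_1|\dot{\widetilde f}_1-\dot f_1|+\mu_{n-2}2^{i-n}|\dot{\widetilde f}_n-\dot f_n|\right).$$
   Context: The polynomial $P_i$ is the cubic Hermite interpolant on $[x_i,x_{i+1}]$. It satisfies $P_i(x_i)=f_i$, $P_i(x_{i+1})=f_{i+1}$, $P_i'(x_i)=\dot f_i$ and $P_i'(x_{i+1})=\dot f_{i+1}$. The linear system is exactly the condition that the second derivatives of consecutive pieces agree at the interior nodes, so the spline is $C^2$. The coefficient matrix of the system is strictly diagonally dominant, so the system has a unique solution. *)

theory Defs
  imports Complex_Main
begin

text \<open>Nodes x, data f and derivative values d are indexed 1..n (as in the paper).\<close>

definition hstep :: "(nat \<Rightarrow> real) \<Rightarrow> nat \<Rightarrow> real" where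
  "hstep x i = x (i+1) - x i"

definition slope :: "(nat \<Rightarrow> real) \<Rightarrow> (nat \<Rightarrow> real) \<Rightarrow> nat \<Rightarrow> real" where
  "slope x f i = (f (i+1) - f i) / hstep x i"

definition lam :: "(nat \<Rightarrow> real) \<Rightarrow> nat \<Rightarrow> real" where
  "lam x i = hstep x (i+1) / (hstep x i + hstep x (i+1))"

definition mu :: "(nat \<Rightarrow> real) \<Rightarrow> nat \<Rightarrow> real" where
  "mu x i = hstep x i / (hstep x i + hstep x (i+1))"

definition spline_system ::
  "nat \<Rightarrow> (nat \<Rightarrow> real) \<Rightarrow> (nat \<Rightarrow> real) \<Rightarrow> (nat \<Rightarrow> real) \<Rightarrow> bool" where
  "spline_system n x f d \<longleftrightarrow>
     (\<forall>i. 1 \<le> i \<and> i \<le> n - 2 \<longrightarrow>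
        lam x i * d i + 2 * d (i+1) + mu x i * d (i+2)
          = 3 * (lam x i * slope x f i + mu x i * slope x f (i+1)))"

definition hpiece ::
  "(nat \<Rightarrow> real) \<Rightarrow> (nat \<Rightarrow> real) \<Rightarrow> (nat \<Rightarrow> real) \<Rightarrow> nat \<Rightarrow> real \<Rightarrow> real" where
  "hpiece x f d i t =
     f i + d i * (t - x i)
     + (slope x f i - d i) / hstep x i * (t - x i)^2
     + (d (i+1) + d i - 2 * slope x f i) / (hstep x i)^2 * (t - x i)^2 * (t - x (i+1))"

end

theory Submission
  imports Defs
begin

(* The derivative errors e_j = dt_j - d_j solve the homogeneous system
   lam_j e_j + 2 e_(j+1) + mu_j e_(j+2) = 0, so |e| is a subsolution of the operator
   E |-> 2 E_(j+1) - lam_j E_j - mu_j E_(j+2), for which a discrete maximum principle holds.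
   Geometric barriers decaying from either end, 4 lam_1 |e_1| 2^-j and 2 mu_(n-2) |e_n| 2^(j-n),
   are supersolutions, so |e_j| is bounded by their sum. On [x_i, x_(i+1)] the two splines
   differ by the cubic with zero end values and end slopes e_i, e_(i+1), which is at most
   h_i (|e_i| + |e_(i+1)|) / 4 in absolute value. *)

lemma hermite_cubic_diff_eq:
  fixes h a F0 F1 D0 D1 E0 E1 :: real
  assumes "h \<noteq> 0"
  shows "(F0 + D0 * a + ((F1 - F0) / h - D0) / h * a^2
          + (D1 + D0 - 2 * ((F1 - F0) / h)) / h^2 * a^2 * (a - h))
       - (F0 + E0 * a + ((F1 - F0) / h - E0) / h * a^2
          + (E1 + E0 - 2 * ((F1 - F0) / h)) / h^2 * a^2 * (a - h))
       = ((E1 - D1) * a^2 * (h - a) - (E0 - D0) * a * (h - a)^2) / h^2"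
  using assms by (simp add: field_simps power2_eq_square)

lemma hpiece_diff_eq:
  assumes "x i < x (i+1)"
  shows "hpiece x f d i t - hpiece x f dt i t =
    ((dt (i+1) - d (i+1)) * (t - x i)^2 * (x (i+1) - t)
     - (dt i - d i) * (t - x i) * (x (i+1) - t)^2) / (hstep x i)^2"
proof -
  have "hstep x i \<noteq> 0" using assms by (simp add: hstep_def)
  moreover have "t - x (i+1) = (t - x i) - hstep x i" "x (i+1) - t = hstep x i - (t - x i)"
    by (simp_all add: hstep_def)
  ultimately show ?thesis
    unfolding hpiece_def slope_def \<open>t - x (i+1) = _\<close> \<open>x (i+1) - t = _\<close>
    using hermite_cubic_diff_eq[of "hstep x i" "f i" "d i" "t - x i" "f (i+1)" "d (i+1)" "dt i" "dt (i+1)"]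
    by simp
qed

lemma abs_hermite_bump_le:
  fixes a b p q :: real
  assumes "0 \<le> a" "0 \<le> b" "0 < a + b"
  shows "\<bar>(p * a^2 * b - q * a * b^2) / (a + b)^2\<bar> \<le> (a + b) / 4 * (\<bar>p\<bar> + \<bar>q\<bar>)"
proof -
  have ab: "a * b \<le> (a + b)^2 / 4"
    using sum_power2_ge_zero[of "a - b" 0] by (simp add: power2_eq_square field_simps)
  have "\<bar>p * a^2 * b - q * a * b^2\<bar> \<le> \<bar>p\<bar> * (a * b * a) + \<bar>q\<bar> * (a * b * b)"
    using assms abs_triangle_ineq4[of "p * (a * b * a)" "q * (a * b * b)"]
    by (simp add: power2_eq_square abs_mult algebra_simps)
  also have "\<dots> \<le> \<bar>p\<bar> * ((a + b)^2 / 4 * (a + b)) + \<bar>q\<bar> * ((a + b)^2 / 4 * (a + b))"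
    using assms ab by (intro add_mono mult_left_mono mult_mono) auto
  also have "\<dots> = (a + b) / 4 * (\<bar>p\<bar> + \<bar>q\<bar>) * (a + b)^2"
    by (simp add: field_simps power2_eq_square)
  finally show ?thesis
    using assms by (simp add: pos_divide_le_eq)
qed

lemma hpiece_diff_bound:
  assumes "x i < x (i+1)" "x i \<le> t" "t \<le> x (i+1)"
  shows "\<bar>hpiece x f d i t - hpiece x f dt i t\<bar>
           \<le> hstep x i / 4 * (\<bar>dt i - d i\<bar> + \<bar>dt (i+1) - d (i+1)\<bar>)"
proof -
  have "hstep x i = (t - x i) + (x (i+1) - t)" by (simp add: hstep_def)
  then show ?thesis
    using hpiece_diff_eq[OF assms(1), of f d t dt] assms
      abs_hermite_bump_le[of "t - x i" "x (i+1) - t" "dt (i+1) - d (i+1)" "dt i - d i"]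
    by (simp add: add.commute)
qed

lemma lam_mu_convex_weights:
  assumes "x j < x (j+1)" "x (j+1) < x (j+2)"
  shows "0 < lam x j" "0 < mu x j" "lam x j + mu x j = 1"
proof -
  have "0 < hstep x j" "0 < hstep x (j+1)"
    using assms by (simp_all add: hstep_def)
  then show "0 < lam x j" "0 < mu x j" "lam x j + mu x j = 1"
    unfolding lam_def mu_def by (simp_all add: add_divide_distrib[symmetric])
qed

lemma spline_system_diff:
  assumes "spline_system n x f d" "spline_system n x f dt" "1 \<le> j" "j + 2 \<le> n"
  shows "lam x j * (dt j - d j) + 2 * (dt (j+1) - d (j+1)) + mu x j * (dt (j+2) - d (j+2)) = 0"
proof -
  have "j \<le> n - 2" using assms(4) by simp
  with assms(1-3) show ?thesis
    unfolding spline_system_def by (simp add: algebra_simps)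
qed

lemma abs_middle_le_of_three_term_eq:
  fixes l u a b c :: real
  assumes "l * a + 2 * b + u * c = 0" "0 \<le> l" "0 \<le> u"
  shows "2 * \<bar>b\<bar> \<le> l * \<bar>a\<bar> + u * \<bar>c\<bar>"
proof -
  have "2 * \<bar>b\<bar> = \<bar>l * a + u * c\<bar>"
    using assms(1) by (simp add: eq_neg_iff_add_eq_0[symmetric] add.commute)
  also have "\<dots> \<le> l * \<bar>a\<bar> + u * \<bar>c\<bar>"
    using assms(2,3) abs_triangle_ineq[of "l * a" "u * c"] by (simp add: abs_mult)
  finally show ?thesis .
qed

lemma discrete_maximum_principle:
  fixes D l u :: "nat \<Rightarrow> real"
  assumes weights: "\<And>j. 1 \<le> j \<Longrightarrow> j + 2 \<le> n \<Longrightarrow> 0 \<le> l j \<and> 0 \<le> u j \<and> l j + u j \<le> 1"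
    and sub: "\<And>j. 1 \<le> j \<Longrightarrow> j + 2 \<le> n \<Longrightarrow> 2 * D (j+1) \<le> l j * D j + u j * D (j+2)"
    and "D 1 \<le> 0" "D n \<le> 0" "k \<in> {1..n}"
  shows "D k \<le> 0"
proof -
  define M where "M = Max (D ` {1..n})"
  have le_M: "D m \<le> M" if "m \<in> {1..n}" for m
    using that by (simp add: M_def)
  obtain m where m: "m \<in> {1..n}" "D m = M"
    using Max_in[of "D ` {1..n}"] \<open>k \<in> {1..n}\<close> unfolding M_def by fastforce
  have "M \<le> 0"
  proof (rule ccontr)
    assume "\<not> M \<le> 0"
    with m \<open>D 1 \<le> 0\<close> \<open>D n \<le> 0\<close> have "m \<noteq> 1" "m \<noteq> n" by auto
    define j where "j = m - 1"
    have j: "m = j + 1" "1 \<le> j" "j + 2 \<le> n"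
      using m(1) \<open>m \<noteq> 1\<close> \<open>m \<noteq> n\<close> by (auto simp: j_def)
    have "2 * M \<le> l j * D j + u j * D (j+2)"
      using sub[OF j(2,3)] m j by simp
    also have "\<dots> \<le> l j * M + u j * M"
      using weights[OF j(2,3)] le_M[of j] le_M[of "j+2"] j
      by (intro add_mono mult_left_mono) auto
    also have "\<dots> \<le> M"
      using weights[OF j(2,3)] \<open>\<not> M \<le> 0\<close> by (simp add: mult_left_le_one_le flip: distrib_right)
    finally show False using \<open>\<not> M \<le> 0\<close> by simp
  qed
  then show ?thesis using le_M[OF \<open>k \<in> {1..n}\<close>] by simp
qed

(* At the end node the barrier takes the boundary error itself; the factor l (resp. u) in
   front of the geometric part is what keeps the inequality at the neighbouring node valid. *)
definition left_barrier :: "real \<Rightarrow> real \<Rightarrow> nat \<Rightarrow> real" where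
  "left_barrier l A j = (if j = 1 then A else 4 * l * A * (1/2)^j)"

definition right_barrier :: "nat \<Rightarrow> real \<Rightarrow> real \<Rightarrow> nat \<Rightarrow> real" where
  "right_barrier n u B j = (if j = n then B else 2 * u * B * 2^j / 2^n)"

lemma left_barrier_supersolution:
  fixes l u :: "nat \<Rightarrow> real"
  assumes "0 \<le> l j" "0 \<le> u j" "l j + u j = 1" "1 \<le> j" "0 \<le> l 1" "0 \<le> A"
  shows "l j * left_barrier (l 1) A j + u j * left_barrier (l 1) A (j+2)
           \<le> 2 * left_barrier (l 1) A (j+1)"
proof (cases "j = 1")
  case True
  have lb: "left_barrier (l 1) A j = A" "left_barrier (l 1) A (j+1) = l j * A"
    "left_barrier (l 1) A (j+2) = l j * A / 2"
    using True by (simp_all add: left_barrier_def power2_eq_square)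
  have "l j * left_barrier (l 1) A j + u j * left_barrier (l 1) A (j+2)
      = l j * A + u j * (l j * A) / 2"
    unfolding lb by simp
  also have "\<dots> \<le> l j * A + l j * A"
  proof -
    have "0 \<le> l j * A" "u j * (l j * A) \<le> l j * A"
      using assms by (auto intro: mult_left_le_one_le)
    then show ?thesis by linarith
  qed
  also have "\<dots> = 2 * left_barrier (l 1) A (j+1)"
    unfolding lb by simp
  finally show ?thesis .
next
  case False
  define g where "g = 4 * l 1 * A * (1/2)^(j+2)"
  have "0 \<le> g" using assms by (simp add: g_def)
  have lb: "left_barrier (l 1) A j = 4 * g" "left_barrier (l 1) A (j+1) = 2 * g"
    "left_barrier (l 1) A (j+2) = g"
    using False assms(4) by (simp_all add: left_barrier_def g_def)
  have "u j = 1 - l j" using assms(3) by simp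
  have "l j * left_barrier (l 1) A j + u j * left_barrier (l 1) A (j+2) = g + 3 * (l j * g)"
    unfolding lb \<open>u j = 1 - l j\<close> by (simp add: algebra_simps)
  also have "\<dots> \<le> 4 * g"
    using assms \<open>0 \<le> g\<close> by (simp add: mult_left_le_one_le)
  also have "\<dots> = 2 * left_barrier (l 1) A (j+1)"
    unfolding lb by simp
  finally show ?thesis .
qed

lemma right_barrier_supersolution:
  fixes l u :: "nat \<Rightarrow> real"
  assumes "0 \<le> l j" "0 \<le> u j" "l j + u j = 1" "j + 2 \<le> n" "0 \<le> u (n-2)" "0 \<le> B"
  shows "l j * right_barrier n (u (n-2)) B j + u j * right_barrier n (u (n-2)) B (j+2)
           \<le> 2 * right_barrier n (u (n-2)) B (j+1)"
proof (cases "j + 2 = n")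
  case True
  define g where "g = u j * B / 4"
  have "0 \<le> g" using assms by (simp add: g_def)
  have rb: "right_barrier n (u (n-2)) B j = 2 * g" "right_barrier n (u (n-2)) B (j+1) = 4 * g"
    "right_barrier n (u (n-2)) B (j+2) = B"
    by (simp_all add: right_barrier_def g_def power_add flip: True)
  have "l j * right_barrier n (u (n-2)) B j + u j * right_barrier n (u (n-2)) B (j+2)
      = l j * (2 * g) + 4 * g"
    unfolding rb by (simp add: g_def)
  also have "\<dots> \<le> 2 * g + 4 * g"
    using assms \<open>0 \<le> g\<close> by (simp add: mult_left_le_one_le)
  also have "\<dots> \<le> 2 * right_barrier n (u (n-2)) B (j+1)"
    unfolding rb using \<open>0 \<le> g\<close> by simp
  finally show ?thesis .
next
  case False
  define g where "g = 2 * u (n-2) * B * 2^j / 2^n"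
  have "0 \<le> g" using assms by (simp add: g_def)
  have rb: "right_barrier n (u (n-2)) B j = g" "right_barrier n (u (n-2)) B (j+1) = 2 * g"
    "right_barrier n (u (n-2)) B (j+2) = 4 * g"
    using False assms(4) by (simp_all add: right_barrier_def g_def)
  have "l j = 1 - u j" using assms(3) by simp
  have "l j * right_barrier n (u (n-2)) B j + u j * right_barrier n (u (n-2)) B (j+2)
      = g + 3 * (u j * g)"
    unfolding rb \<open>l j = 1 - u j\<close> by (simp add: algebra_simps)
  also have "\<dots> \<le> 4 * g"
    using assms \<open>0 \<le> g\<close> by (simp add: mult_left_le_one_le)
  also have "\<dots> = 2 * right_barrier n (u (n-2)) B (j+1)"
    unfolding rb by simp
  finally show ?thesis .
qed

lemma spline_derivative_error_bound:
  assumes increasing: "\<forall>i. 1 \<le> i \<and> i < n \<longrightarrow> x i < x (i+1)"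
    and "spline_system n x f d" "spline_system n x f dt"
    and "2 \<le> k" "k < n"
  shows "\<bar>dt k - d k\<bar> \<le> 4 * lam x 1 * \<bar>dt 1 - d 1\<bar> * (1/2)^k
                         + 2 * mu x (n-2) * \<bar>dt n - d n\<bar> * 2 powr (real k - real n)"
proof -
  define A where "A = \<bar>dt 1 - d 1\<bar>"
  define B where "B = \<bar>dt n - d n\<bar>"
  define \<Phi> where "\<Phi> j = left_barrier (lam x 1) A j + right_barrier n (mu x (n-2)) B j" for j
  define D where "D j = \<bar>dt j - d j\<bar> - \<Phi> j" for j
  have weights: "0 < lam x j \<and> 0 < mu x j \<and> lam x j + mu x j = 1"
    if "1 \<le> j" "j + 2 \<le> n" for j
    using lam_mu_convex_weights[of x j] increasing that by simp
  have "1 \<le> n - 2" "n - 2 + 2 \<le> n" using assms(4,5) by auto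
  then have "0 \<le> lam x 1" "0 \<le> mu x (n-2)"
    using weights[of 1] weights[of "n-2"] by auto
  have sub: "2 * D (j+1) \<le> lam x j * D j + mu x j * D (j+2)"
    if "1 \<le> j" "j + 2 \<le> n" for j
  proof -
    have "2 * \<bar>dt (j+1) - d (j+1)\<bar>
        \<le> lam x j * \<bar>dt j - d j\<bar> + mu x j * \<bar>dt (j+2) - d (j+2)\<bar>"
      using abs_middle_le_of_three_term_eq spline_system_diff[OF assms(2,3) that] weights[OF that]
      by simp
    moreover have "lam x j * \<Phi> j + mu x j * \<Phi> (j+2) \<le> 2 * \<Phi> (j+1)"
      using left_barrier_supersolution[of "lam x" j "mu x" A]
        right_barrier_supersolution[of "lam x" j "mu x" n B]
        weights[OF that] that \<open>0 \<le> lam x 1\<close> \<open>0 \<le> mu x (n-2)\<close>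
      by (simp add: \<Phi>_def A_def B_def algebra_simps)
    ultimately show ?thesis
      by (simp add: D_def algebra_simps)
  qed
  have "D 1 \<le> 0" "D n \<le> 0"
    using assms(4,5) \<open>0 \<le> lam x 1\<close> \<open>0 \<le> mu x (n-2)\<close>
    by (simp_all add: D_def \<Phi>_def A_def B_def left_barrier_def right_barrier_def)
  then have "D k \<le> 0"
    using discrete_maximum_principle[of n "lam x" "mu x" D k] weights sub assms(4,5)
    by fastforce
  moreover have "2 * mu x (n-2) * B * 2^k / 2^n = 2 * mu x (n-2) * B * 2 powr (real k - real n)"
    by (simp add: powr_diff powr_realpow)
  ultimately show ?thesis
    using assms(4,5) by (simp add: D_def \<Phi>_def A_def B_def left_barrier_def right_barrier_def)
qed

theorem proposition1:
  fixes n :: nat and x f d dt :: "nat \<Rightarrow> real"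
  assumes "n \<ge> 3"
    and "\<forall>i. 1 \<le> i \<and> i < n \<longrightarrow> x i < x (i+1)"
    and "spline_system n x f d"
    and "spline_system n x f dt"
    and "dt 1 \<noteq> d 1" and "dt n \<noteq> d n"
  shows "\<forall>i t. 2 \<le> i \<and> i \<le> n - 2 \<and> x i \<le> t \<and> t \<le> x (i+1) \<longrightarrow>
           \<bar>hpiece x f d i t - hpiece x f dt i t\<bar>
             \<le> 8 * hstep x i * ((1/2)^i * lam x 1 * \<bar>dt 1 - d 1\<bar>
                                + mu x (n-2) * 2 powr (real i - real n) * \<bar>dt n - d n\<bar>)"
proof (intro allI impI)
  fix i t
  assume it: "2 \<le> i \<and> i \<le> n - 2 \<and> x i \<le> t \<and> t \<le> x (i+1)"
  define P where "P = (1/2)^i * lam x 1 * \<bar>dt 1 - d 1\<bar>"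
  define Q where "Q = mu x (n-2) * 2 powr (real i - real n) * \<bar>dt n - d n\<bar>"
  have "i + 1 < n" using assms(1) it by linarith
  then have "x i < x (i+1)" using assms(2) it by auto
  have "0 < hstep x i" "0 \<le> P" "0 \<le> Q"
    using assms(1,2) it lam_mu_convex_weights[of x 1] lam_mu_convex_weights[of x "n-2"]
    by (auto simp: hstep_def P_def Q_def)
  have "\<bar>hpiece x f d i t - hpiece x f dt i t\<bar>
      \<le> hstep x i / 4 * (\<bar>dt i - d i\<bar> + \<bar>dt (i+1) - d (i+1)\<bar>)"
    using hpiece_diff_bound \<open>x i < x (i+1)\<close> it by blast
  also have "\<dots> \<le> hstep x i / 4 * ((4 * P + 2 * Q) + (2 * P + 4 * Q))"
  proof -
    have "2 powr (real (i+1) - real n) = 2 * 2 powr (real i - real n)"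
      using powr_add[of 2 1 "real i - real n"] by (simp add: add_diff_eq)
    then have "\<bar>dt i - d i\<bar> \<le> 4 * P + 2 * Q" "\<bar>dt (i+1) - d (i+1)\<bar> \<le> 2 * P + 4 * Q"
      using spline_derivative_error_bound[OF assms(2-4), of i]
        spline_derivative_error_bound[OF assms(2-4), of "i+1"] it \<open>i + 1 < n\<close>
      by (simp_all add: P_def Q_def algebra_simps)
    with \<open>0 < hstep x i\<close> show ?thesis by (intro mult_left_mono add_mono) auto
  qed
  also have "\<dots> = 3/2 * (hstep x i * (P + Q))"
    by (simp add: algebra_simps)
  also have "\<dots> \<le> 8 * hstep x i * (P + Q)"
    using \<open>0 < hstep x i\<close> \<open>0 \<le> P\<close> \<open>0 \<le> Q\<close> by (simp add: mult.assoc)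
  finally show "\<bar>hpiece x f d i t - hpiece x f dt i t\<bar> \<le> 8 * hstep x i * (P + Q)" .
qed

end
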